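(* Let $\mathcal Z,\mathcal Z'$ be measurable spaces, $M\ge2$, $K$ a characteristic kernel on $\{1,\ldots,M\}$, and fixed mixture proportions $\pi_1,\ldots,\pi_M\in(0,1)$ with $\sum_i\pi_i=1$. Let $\kappa$ be a transition kernel from $\mathcal Z$ to $\mathcal Z'$ (for each $z\in\mathcal Z$, $\kappa(z,\cdot)$ is a probability measure on $\mathcal Z'$, and $z\mapsto\kappa(z,B)$ is measurable). Let $P_1,\dots,P_M$ be probability measures on $\mathcal Z$ and define $Q_i(B)=\int\kappa(z,B)\,dP_i(z)$ for measurable $B\subset\mathcal Z'$. Then $$\eta(P_1,\ldots,P_M)\ge\eta(Q_1,\ldots,Q_M).$$ Moreover, let $(\tilde Z,\tilde\Delta)$ be such that $\mathbb P(\tilde\Delta=i)=\pi_i$ and $\tilde Z\mid\tilde\Delta=i\sim P_i$, and given $(\tilde Z,\tilde\Delta)$ draw $\tilde Z'\sim\kappa(\tilde Z,\cdot)$. Then equality holds if and only if the conditional distribution of $\tilde\Delta$ given $\tilde Z$ coincides with the conditional distribution of $\tilde\Delta$ given $\tilde Z'$ (i.e. $\mathbb P(\tilde\Delta=i\mid\tilde Z)=\mathbb P(\tilde\Delta=i\mid\tilde Z')$ a.s. for all $i$). In particular, if $T:\mathcal Z\to\mathcal Z'$ is a measurable bijection and $Q_i$ is the law of $T(Y)$ for $Y\sim P_i$, then $\eta(P_1,\ldots,P_M)=\eta(Q_1,\ldots,Q_M)$.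
   Context: A kernel on $\mathcal S=\{1,\ldots,M\}$ is a symmetric $K:\mathcal S^2\to\mathbb R$ with $[K(i,j)]$ positive semidefinite; it is characteristic if $\sum_{i,j}\alpha_i\alpha_jK(i,j)>0$ for every nonzero $\alpha\in\mathbb R^M$ with $\sum\alpha_i=0$. For probability measures $R_1,\dots,R_M$ on a measurable space, the KMD is defined as follows: let $(\tilde Z,\tilde\Delta)$ have $\mathbb P(\tilde\Delta=i)=\pi_i$ and $\tilde Z\mid\tilde\Delta=i\sim R_i$; let $(\tilde Z_1,\tilde\Delta_1),(\tilde Z_2,\tilde\Delta_2)$ be i.i.d. copies; let $\tilde\Delta'$ satisfy $(\tilde Z,\tilde\Delta')\overset d=(\tilde Z,\tilde\Delta)$ with $\tilde\Delta,\tilde\Delta'$ conditionally independent given $\tilde Z$. Then $$\eta(R_1,\ldots,R_M)=\frac{\mathbb E[K(\tilde\Delta,\tilde\Delta')]-\mathbb E[K(\tilde\Delta_1,\tilde\Delta_2)]}{\mathbb E[K(\tilde\Delta,\tilde\Delta)]-\mathbb E[K(\tilde\Delta_1,\tilde\Delta_2)]}.$$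
   Formalization: In the closing claim the measurable bijection T also has a measurable inverse from $\mathcal Z'$ to $\mathcal Z$. The statement above fails without it. *)

theory Defs
  imports "HOL-Probability.Probability"
begin

definition char_kernel :: "nat \<Rightarrow> (nat \<Rightarrow> nat \<Rightarrow> real) \<Rightarrow> bool" where
  "char_kernel M K \<longleftrightarrow>
     (\<forall>i\<in>{1..M}. \<forall>j\<in>{1..M}. K i j = K j i) \<and>
     (\<forall>\<alpha>::nat \<Rightarrow> real. (\<Sum>i\<in>{1..M}. \<Sum>j\<in>{1..M}. \<alpha> i * \<alpha> j * K i j) \<ge> 0) \<and>
     (\<forall>\<alpha>::nat \<Rightarrow> real. (\<Sum>i\<in>{1..M}. \<alpha> i) = 0 \<and> (\<exists>i\<in>{1..M}. \<alpha> i \<noteq> 0) \<longrightarrow>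
        (\<Sum>i\<in>{1..M}. \<Sum>j\<in>{1..M}. \<alpha> i * \<alpha> j * K i j) > 0)"

definition transition_kernel :: "'a measure \<Rightarrow> 'b measure \<Rightarrow> ('a \<Rightarrow> 'b measure) \<Rightarrow> bool" where
  "transition_kernel X Y \<kappa> \<longleftrightarrow>
     (\<forall>z\<in>space X. prob_space (\<kappa> z) \<and> sets (\<kappa> z) = sets Y) \<and>
     (\<forall>B\<in>sets Y. (\<lambda>z. emeasure (\<kappa> z) B) \<in> borel_measurable X)"

definition mixture :: "nat \<Rightarrow> (nat \<Rightarrow> real) \<Rightarrow> 'a measure \<Rightarrow> (nat \<Rightarrow> 'a measure) \<Rightarrow> 'a measure" where
  "mixture M \<pi> X R =
     measure_of (space X) (sets X) (\<lambda>A. \<Sum>i\<in>{1..M}. ennreal (\<pi> i) * emeasure (R i) A)"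

text \<open>Posterior P(Delta~ = i | Z~ = z) = pi_i dR_i / d(mixture) (z).\<close>
definition posterior :: "nat \<Rightarrow> (nat \<Rightarrow> real) \<Rightarrow> 'a measure \<Rightarrow> (nat \<Rightarrow> 'a measure) \<Rightarrow> nat \<Rightarrow> 'a \<Rightarrow> real" where
  "posterior M \<pi> X R i z = \<pi> i * enn2real (RN_deriv (mixture M \<pi> X R) (R i) z)"

text \<open>Since Delta~, Delta~' are conditionally independent given Z~ with
  the same conditional law, E[K(Delta~,Delta~')] = E[sum_ij K(i,j) p_i(Z~) p_j(Z~)];
  E[K(Delta~_1,Delta~_2)] = sum_ij pi_i pi_j K(i,j); E[K(Delta~,Delta~)] = sum_i pi_i K(i,i).\<close>
definition kmd :: "nat \<Rightarrow> (nat \<Rightarrow> nat \<Rightarrow> real) \<Rightarrow> (nat \<Rightarrow> real) \<Rightarrow> 'a measure \<Rightarrow> (nat \<Rightarrow> 'a measure) \<Rightarrow> real" where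
  "kmd M K \<pi> X R =
     (let cross = (\<Sum>i\<in>{1..M}. \<Sum>j\<in>{1..M}. \<pi> i * \<pi> j * K i j);
          same = (\<integral>z. (\<Sum>i\<in>{1..M}. \<Sum>j\<in>{1..M}.
                     K i j * posterior M \<pi> X R i z * posterior M \<pi> X R j z) \<partial>mixture M \<pi> X R);
          diag = (\<Sum>i\<in>{1..M}. \<pi> i * K i i)
      in (same - cross) / (diag - cross))"

definition joint_law :: "nat \<Rightarrow> (nat \<Rightarrow> real) \<Rightarrow> 'a measure \<Rightarrow> 'b measure \<Rightarrow> (nat \<Rightarrow> 'a measure)
    \<Rightarrow> ('a \<Rightarrow> 'b measure) \<Rightarrow> ('a \<times> 'b) measure" where
  "joint_law M \<pi> X Y P \<kappa> =
     mixture M \<pi> X P \<bind> (\<lambda>z. distr (\<kappa> z) (X \<Otimes>\<^sub>M Y) (\<lambda>z'. (z, z')))"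

end

theory Submission
  imports Defs
begin

text \<open>Write \<open>p\<^sub>i(z)\<close> and \<open>q\<^sub>i(z')\<close> for the posteriors of the label \<open>\<Delta>\<close> given \<open>Z = z\<close> and given
  \<open>Z' = z'\<close>. Both KMDs have the same denominator, and their numerators differ only in the terms
  \<open>E \<langle>p(Z), p(Z)\<rangle>\<^sub>K\<close> and \<open>E \<langle>q(Z'), q(Z')\<rangle>\<^sub>K\<close>. Since \<open>\<Delta> \<rightarrow> Z \<rightarrow> Z'\<close> is a Markov chain, \<open>q(Z')\<close> is
  the conditional expectation of \<open>p(Z)\<close> given \<open>Z'\<close>, so \<open>E[p\<^sub>i(Z) q\<^sub>j(Z')] = E[q\<^sub>i(Z') q\<^sub>j(Z')]\<close>, and
  Pythagoras gives \<open>E \<langle>p(Z), p(Z)\<rangle>\<^sub>K = E \<langle>q(Z'), q(Z')\<rangle>\<^sub>K + E \<langle>p(Z) - q(Z'), p(Z) - q(Z')\<rangle>\<^sub>K\<close>.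
  The last term is nonnegative, and it vanishes iff \<open>p(Z) = q(Z')\<close> almost surely, because
  \<open>p(Z) - q(Z')\<close> sums to zero and \<open>K\<close> is characteristic. A bimeasurable bijection can be applied
  in both directions, which turns the inequality into an equality.\<close>

section \<open>Kernel quadratic forms\<close>

definition kernel_inner :: "nat \<Rightarrow> (nat \<Rightarrow> nat \<Rightarrow> real) \<Rightarrow> (nat \<Rightarrow> real) \<Rightarrow> (nat \<Rightarrow> real) \<Rightarrow> real"
  where "kernel_inner M K u v = (\<Sum>i\<in>{1..M}. \<Sum>j\<in>{1..M}. K i j * u i * v j)"

lemma char_kernel_sym: "char_kernel M K \<Longrightarrow> i \<in> {1..M} \<Longrightarrow> j \<in> {1..M} \<Longrightarrow> K i j = K j i"
  unfolding char_kernel_def by blast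

lemma kernel_inner_self_eq_sum:
  "kernel_inner M K v v = (\<Sum>i\<in>{1..M}. \<Sum>j\<in>{1..M}. v i * v j * K i j)"
  unfolding kernel_inner_def by (intro sum.cong refl) (simp add: ac_simps)

lemma kernel_inner_self_nonneg: "char_kernel M K \<Longrightarrow> 0 \<le> kernel_inner M K v v"
  unfolding char_kernel_def kernel_inner_self_eq_sum by blast

lemma kernel_inner_self_pos:
  "char_kernel M K \<Longrightarrow> (\<Sum>i\<in>{1..M}. v i) = 0 \<Longrightarrow> i \<in> {1..M} \<Longrightarrow> v i \<noteq> 0
    \<Longrightarrow> 0 < kernel_inner M K v v"
  unfolding char_kernel_def kernel_inner_self_eq_sum by blast

lemma kernel_inner_self_eq_0_imp_zero:
  assumes "char_kernel M K" "(\<Sum>i\<in>{1..M}. v i) = 0" "kernel_inner M K v v = 0" "i \<in> {1..M}"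
  shows "v i = 0"
  using kernel_inner_self_pos[OF assms(1,2,4)] assms(3) by fastforce

lemma kernel_inner_diff_left:
  "kernel_inner M K (\<lambda>i. u i - v i) w = kernel_inner M K u w - kernel_inner M K v w"
  unfolding kernel_inner_def by (simp add: algebra_simps sum_subtractf)

lemma kernel_inner_diff_right:
  "kernel_inner M K u (\<lambda>j. v j - w j) = kernel_inner M K u v - kernel_inner M K u w"
  unfolding kernel_inner_def by (simp add: algebra_simps sum_subtractf)

lemma kernel_inner_commute:
  "char_kernel M K \<Longrightarrow> kernel_inner M K u v = kernel_inner M K v u"
  unfolding kernel_inner_def by (subst sum.swap) (auto intro!: sum.cong simp: char_kernel_sym)

lemma kernel_inner_self_add:
  assumes "char_kernel M K"
  shows "kernel_inner M K (\<lambda>i. b i + d i) (\<lambda>i. b i + d i)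
    = kernel_inner M K b b + 2 * kernel_inner M K d b + kernel_inner M K d d"
proof -
  have "kernel_inner M K (\<lambda>i. b i + d i) (\<lambda>i. b i + d i)
      = kernel_inner M K b b + kernel_inner M K b d + kernel_inner M K d b + kernel_inner M K d d"
    unfolding kernel_inner_def by (simp add: algebra_simps sum.distrib)
  then show ?thesis using kernel_inner_commute[OF assms, of b d] by simp
qed

lemma kernel_inner_indicator_left:
  "k \<in> {1..M} \<Longrightarrow> kernel_inner M K (\<lambda>i. if i = k then 1 else 0) v = (\<Sum>j\<in>{1..M}. K k j * v j)"
  unfolding kernel_inner_def by (simp add: if_distrib if_distribR sum.If_cases)

text \<open>The denominator equals \<open>\<Sum>\<^sub>k \<pi>\<^sub>k \<langle>e\<^sub>k - \<pi>, e\<^sub>k - \<pi>\<rangle>\<^sub>K\<close>, and each \<open>e\<^sub>k - \<pi>\<close> is a nonzero vector with zero sum.\<close>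

lemma kmd_denominator_pos:
  assumes K: "char_kernel M K"
    and pi: "\<And>i. i \<in> {1..M} \<Longrightarrow> 0 < \<pi> i \<and> \<pi> i < 1" and pi_sum: "(\<Sum>i\<in>{1..M}. \<pi> i) = 1"
  shows "(\<Sum>i\<in>{1..M}. \<Sum>j\<in>{1..M}. \<pi> i * \<pi> j * K i j) < (\<Sum>i\<in>{1..M}. \<pi> i * K i i)"
proof -
  define C where "C = kernel_inner M K \<pi> \<pi>"
  define e where "e k i = (if i = k then 1 else 0) - \<pi> i" for k i :: nat
  have e_self: "kernel_inner M K (e k) (e k) = K k k - 2 * (\<Sum>j\<in>{1..M}. K k j * \<pi> j) + C"
    if k: "k \<in> {1..M}" for k
  proof -
    define \<delta> where "\<delta> = (\<lambda>i. if i = k then 1 else (0::real))"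
    have "kernel_inner M K (e k) (e k) = kernel_inner M K \<delta> \<delta> - kernel_inner M K \<delta> \<pi>
        - (kernel_inner M K \<pi> \<delta> - kernel_inner M K \<pi> \<pi>)"
      unfolding e_def \<delta>_def kernel_inner_diff_left kernel_inner_diff_right ..
    moreover have "kernel_inner M K \<delta> \<delta> = K k k"
      using k unfolding \<delta>_def kernel_inner_indicator_left[OF k] by (simp add: if_distrib cong: if_cong)
    ultimately show ?thesis
      using kernel_inner_commute[OF K, of \<pi> \<delta>] kernel_inner_indicator_left[OF k, of K \<pi>]
      by (simp add: C_def \<delta>_def)
  qed
  have "0 < (\<Sum>k\<in>{1..M}. \<pi> k * kernel_inner M K (e k) (e k))"
  proof (rule sum_pos)
    show "{1..M} \<noteq> {}" using pi_sum by (metis sum.empty zero_neq_one)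
    fix k assume k: "k \<in> {1..M}"
    have "(\<Sum>i\<in>{1..M}. e k i) = 0" using k pi_sum by (simp add: e_def sum_subtractf)
    moreover have "e k k \<noteq> 0" using pi[OF k] by (simp add: e_def)
    ultimately show "0 < \<pi> k * kernel_inner M K (e k) (e k)"
      using pi[OF k] k kernel_inner_self_pos[OF K] by auto
  qed simp
  also have "\<dots> = (\<Sum>k\<in>{1..M}. \<pi> k * K k k - 2 * (\<pi> k * (\<Sum>j\<in>{1..M}. K k j * \<pi> j)) + \<pi> k * C)"
    by (intro sum.cong refl) (simp add: e_self algebra_simps)
  also have "\<dots> = (\<Sum>k\<in>{1..M}. \<pi> k * K k k)
      - 2 * (\<Sum>k\<in>{1..M}. \<pi> k * (\<Sum>j\<in>{1..M}. K k j * \<pi> j)) + (\<Sum>k\<in>{1..M}. \<pi> k) * C"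
    by (simp add: sum.distrib sum_subtractf sum_distrib_left sum_distrib_right)
  also have "(\<Sum>k\<in>{1..M}. \<pi> k * (\<Sum>j\<in>{1..M}. K k j * \<pi> j)) = C"
    unfolding C_def kernel_inner_def by (simp add: sum_distrib_left ac_simps)
  finally show ?thesis
    using pi_sum by (simp add: C_def kernel_inner_def ac_simps)
qed

lemma kmd_eq_kernel_inner:
  "kmd M K \<pi> X R =
    ((\<integral>z. kernel_inner M K (\<lambda>i. posterior M \<pi> X R i z) (\<lambda>i. posterior M \<pi> X R i z) \<partial>mixture M \<pi> X R)
      - (\<Sum>i\<in>{1..M}. \<Sum>j\<in>{1..M}. \<pi> i * \<pi> j * K i j))
    / ((\<Sum>i\<in>{1..M}. \<pi> i * K i i) - (\<Sum>i\<in>{1..M}. \<Sum>j\<in>{1..M}. \<pi> i * \<pi> j * K i j))"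
  unfolding kmd_def kernel_inner_def Let_def ..

lemma (in finite_measure) integrable_mult_bounded:
  fixes f g :: "'a \<Rightarrow> real"
  assumes "f \<in> borel_measurable M" "g \<in> borel_measurable M"
    and "AE x in M. \<bar>f x\<bar> \<le> B" "AE x in M. \<bar>g x\<bar> \<le> C"
  shows "integrable M (\<lambda>x. f x * g x)"
proof (rule integrable_const_bound[where B = "B * C"])
  show "AE x in M. norm (f x * g x) \<le> B * C"
    using assms(3,4) by eventually_elim (auto simp: abs_mult intro: mult_mono)
qed (use assms(1,2) in measurable)

lemma
  assumes J: "finite_measure J"
    and u: "\<And>i. i \<in> {1..M} \<Longrightarrow> u i \<in> borel_measurable J" "\<And>i. i \<in> {1..M} \<Longrightarrow> AE w in J. \<bar>u i w\<bar> \<le> B"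
    and v: "\<And>j. j \<in> {1..M} \<Longrightarrow> v j \<in> borel_measurable J" "\<And>j. j \<in> {1..M} \<Longrightarrow> AE w in J. \<bar>v j w\<bar> \<le> C"
  shows integrable_kernel_inner: "integrable J (\<lambda>w. kernel_inner M K (\<lambda>i. u i w) (\<lambda>j. v j w))"
    and integral_kernel_inner: "(\<integral>w. kernel_inner M K (\<lambda>i. u i w) (\<lambda>j. v j w) \<partial>J)
      = (\<Sum>i\<in>{1..M}. \<Sum>j\<in>{1..M}. K i j * (\<integral>w. u i w * v j w \<partial>J))"
proof -
  have uv: "integrable J (\<lambda>w. u i w * v j w)" if "i \<in> {1..M}" "j \<in> {1..M}" for i j
    using that u v by (intro finite_measure.integrable_mult_bounded[OF J])
  then show "integrable J (\<lambda>w. kernel_inner M K (\<lambda>i. u i w) (\<lambda>j. v j w))"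
    unfolding kernel_inner_def mult.assoc
    by (intro Bochner_Integration.integrable_sum integrable_mult_right) auto
  have "(\<integral>w. kernel_inner M K (\<lambda>i. u i w) (\<lambda>j. v j w) \<partial>J)
      = (\<Sum>i\<in>{1..M}. \<integral>w. (\<Sum>j\<in>{1..M}. K i j * (u i w * v j w)) \<partial>J)"
    unfolding kernel_inner_def mult.assoc using uv
    by (intro Bochner_Integration.integral_sum Bochner_Integration.integrable_sum integrable_mult_right) auto
  also have "\<dots> = (\<Sum>i\<in>{1..M}. \<Sum>j\<in>{1..M}. K i j * (\<integral>w. u i w * v j w \<partial>J))"
    using uv by (intro sum.cong refl) (simp add: Bochner_Integration.integral_sum)
  finally show "(\<integral>w. kernel_inner M K (\<lambda>i. u i w) (\<lambda>j. v j w) \<partial>J)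
      = (\<Sum>i\<in>{1..M}. \<Sum>j\<in>{1..M}. K i j * (\<integral>w. u i w * v j w \<partial>J))" .
qed

text \<open>The hypothesis \<open>orth\<close> says that \<open>a - b\<close> is \<open>L\<^sup>2\<close>-orthogonal to every \<open>b\<^sub>j\<close>, as when each \<open>b\<^sub>i\<close> is
  a conditional expectation of \<open>a\<^sub>i\<close>.\<close>

lemma integral_kernel_inner_pythagoras:
  assumes J: "finite_measure J" and K: "char_kernel M K"
    and a: "\<And>i. i \<in> {1..M} \<Longrightarrow> a i \<in> borel_measurable J" "\<And>i. i \<in> {1..M} \<Longrightarrow> AE w in J. \<bar>a i w\<bar> \<le> 1"
    and b: "\<And>i. i \<in> {1..M} \<Longrightarrow> b i \<in> borel_measurable J" "\<And>i. i \<in> {1..M} \<Longrightarrow> AE w in J. \<bar>b i w\<bar> \<le> 1"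
    and orth: "\<And>i j. i \<in> {1..M} \<Longrightarrow> j \<in> {1..M} \<Longrightarrow> (\<integral>w. a i w * b j w \<partial>J) = (\<integral>w. b i w * b j w \<partial>J)"
  shows "(\<integral>w. kernel_inner M K (\<lambda>i. a i w) (\<lambda>i. a i w) \<partial>J)
    = (\<integral>w. kernel_inner M K (\<lambda>i. b i w) (\<lambda>i. b i w) \<partial>J)
      + (\<integral>w. kernel_inner M K (\<lambda>i. a i w - b i w) (\<lambda>i. a i w - b i w) \<partial>J)"
proof -
  define d where "d i w = a i w - b i w" for i w
  have d: "d i \<in> borel_measurable J" "AE w in J. \<bar>d i w\<bar> \<le> 2" if "i \<in> {1..M}" for i
    using a[OF that] b[OF that] unfolding d_def by (auto elim: eventually_elim2)
  have "(\<integral>w. d i w * b j w \<partial>J) = 0" if "i \<in> {1..M}" "j \<in> {1..M}" for i j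
  proof -
    have "(\<integral>w. d i w * b j w \<partial>J) = (\<integral>w. a i w * b j w \<partial>J) - (\<integral>w. b i w * b j w \<partial>J)"
      unfolding d_def left_diff_distrib using that a b
      by (intro Bochner_Integration.integral_diff finite_measure.integrable_mult_bounded[OF J])
    then show ?thesis using orth[OF that] by simp
  qed
  moreover have "(\<integral>w. kernel_inner M K (\<lambda>i. d i w) (\<lambda>j. b j w) \<partial>J)
      = (\<Sum>i\<in>{1..M}. \<Sum>j\<in>{1..M}. K i j * (\<integral>w. d i w * b j w \<partial>J))"
    by (rule integral_kernel_inner[OF J]) (use d b in auto)
  ultimately have cross: "(\<integral>w. kernel_inner M K (\<lambda>i. d i w) (\<lambda>j. b j w) \<partial>J) = 0"
    by simp
  have "kernel_inner M K (\<lambda>i. a i w) (\<lambda>i. a i w) = kernel_inner M K (\<lambda>i. b i w) (\<lambda>i. b i w)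
      + 2 * kernel_inner M K (\<lambda>i. d i w) (\<lambda>j. b j w) + kernel_inner M K (\<lambda>i. d i w) (\<lambda>i. d i w)" for w
    using kernel_inner_self_add[OF K, of "\<lambda>i. b i w" "\<lambda>i. d i w"] by (simp add: d_def)
  then have "(\<integral>w. kernel_inner M K (\<lambda>i. a i w) (\<lambda>i. a i w) \<partial>J)
      = (\<integral>w. kernel_inner M K (\<lambda>i. b i w) (\<lambda>i. b i w) \<partial>J)
        + 2 * (\<integral>w. kernel_inner M K (\<lambda>i. d i w) (\<lambda>j. b j w) \<partial>J)
        + (\<integral>w. kernel_inner M K (\<lambda>i. d i w) (\<lambda>i. d i w) \<partial>J)"
    using integrable_kernel_inner[OF J, of M b 1 b 1 K] integrable_kernel_inner[OF J, of M d 2 b 1 K]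
      integrable_kernel_inner[OF J, of M d 2 d 2 K] d b by simp
  then show ?thesis using cross by (simp add: d_def)
qed

lemma
  assumes J: "finite_measure J" and K: "char_kernel M K"
    and a: "\<And>i. i \<in> {1..M} \<Longrightarrow> a i \<in> borel_measurable J" "\<And>i. i \<in> {1..M} \<Longrightarrow> AE w in J. \<bar>a i w\<bar> \<le> 1"
    and b: "\<And>i. i \<in> {1..M} \<Longrightarrow> b i \<in> borel_measurable J" "\<And>i. i \<in> {1..M} \<Longrightarrow> AE w in J. \<bar>b i w\<bar> \<le> 1"
    and orth: "\<And>i j. i \<in> {1..M} \<Longrightarrow> j \<in> {1..M} \<Longrightarrow> (\<integral>w. a i w * b j w \<partial>J) = (\<integral>w. b i w * b j w \<partial>J)"
    and sums: "AE w in J. (\<Sum>i\<in>{1..M}. a i w) = (\<Sum>i\<in>{1..M}. b i w)"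
  shows integral_kernel_inner_le_of_orthogonal:
      "(\<integral>w. kernel_inner M K (\<lambda>i. b i w) (\<lambda>i. b i w) \<partial>J) \<le> (\<integral>w. kernel_inner M K (\<lambda>i. a i w) (\<lambda>i. a i w) \<partial>J)"
    and integral_kernel_inner_eq_iff_of_orthogonal:
      "(\<integral>w. kernel_inner M K (\<lambda>i. a i w) (\<lambda>i. a i w) \<partial>J) = (\<integral>w. kernel_inner M K (\<lambda>i. b i w) (\<lambda>i. b i w) \<partial>J)
        \<longleftrightarrow> (\<forall>i\<in>{1..M}. AE w in J. a i w = b i w)"
proof -
  let ?D = "\<lambda>w. kernel_inner M K (\<lambda>i. a i w - b i w) (\<lambda>i. a i w - b i w)"
  have pyth: "(\<integral>w. kernel_inner M K (\<lambda>i. a i w) (\<lambda>i. a i w) \<partial>J)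
      = (\<integral>w. kernel_inner M K (\<lambda>i. b i w) (\<lambda>i. b i w) \<partial>J) + (\<integral>w. ?D w \<partial>J)"
    by (rule integral_kernel_inner_pythagoras[OF J K a b orth])
  have D_nonneg: "0 \<le> ?D w" for w
    by (rule kernel_inner_self_nonneg[OF K])
  have "AE w in J. \<bar>a i w - b i w\<bar> \<le> 2" if "i \<in> {1..M}" for i
    using a(2)[OF that] b(2)[OF that] by eventually_elim auto
  then have "integrable J ?D"
    by (intro integrable_kernel_inner[OF J]) (use a b in auto)
  then have "(\<integral>w. ?D w \<partial>J) = 0 \<longleftrightarrow> (AE w in J. ?D w = 0)"
    using D_nonneg by (intro integral_nonneg_eq_0_iff_AE) auto
  also have "\<dots> \<longleftrightarrow> (AE w in J. \<forall>i\<in>{1..M}. a i w = b i w)"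
  proof
    assume "AE w in J. ?D w = 0"
    with sums show "AE w in J. \<forall>i\<in>{1..M}. a i w = b i w"
    proof eventually_elim
      fix w assume "(\<Sum>i\<in>{1..M}. a i w) = (\<Sum>i\<in>{1..M}. b i w)" and "?D w = 0"
      then have "(\<Sum>i\<in>{1..M}. a i w - b i w) = 0" and "?D w = 0"
        by (simp_all add: sum_subtractf)
      then show "\<forall>i\<in>{1..M}. a i w = b i w"
        using kernel_inner_self_eq_0_imp_zero[OF K] by fastforce
    qed
  qed (auto elim!: eventually_mono simp: kernel_inner_def)
  also have "\<dots> \<longleftrightarrow> (\<forall>i\<in>{1..M}. AE w in J. a i w = b i w)"
    by (rule AE_ball_countable) auto
  finally show "(\<integral>w. kernel_inner M K (\<lambda>i. a i w) (\<lambda>i. a i w) \<partial>J)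
      = (\<integral>w. kernel_inner M K (\<lambda>i. b i w) (\<lambda>i. b i w) \<partial>J)
      \<longleftrightarrow> (\<forall>i\<in>{1..M}. AE w in J. a i w = b i w)"
    using pyth by simp
  show "(\<integral>w. kernel_inner M K (\<lambda>i. b i w) (\<lambda>i. b i w) \<partial>J)
      \<le> (\<integral>w. kernel_inner M K (\<lambda>i. a i w) (\<lambda>i. a i w) \<partial>J)"
    using pyth integral_nonneg_AE[of ?D J] D_nonneg by simp
qed

section \<open>Mixtures and posteriors\<close>

definition label_law :: "nat \<Rightarrow> (nat \<Rightarrow> real) \<Rightarrow> nat measure" where
  "label_law M \<pi> = density (count_space {1..M}) (\<lambda>i. ennreal (\<pi> i))"

locale mixture_model =
  fixes M :: nat and \<pi> :: "nat \<Rightarrow> real" and X :: "'a measure" and R :: "nat \<Rightarrow> 'a measure"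
  assumes prob_space_R: "\<And>i. i \<in> {1..M} \<Longrightarrow> prob_space (R i)"
    and sets_R: "\<And>i. i \<in> {1..M} \<Longrightarrow> sets (R i) = sets X"
    and pi_pos: "\<And>i. i \<in> {1..M} \<Longrightarrow> 0 < \<pi> i"
    and pi_sum: "(\<Sum>i\<in>{1..M}. \<pi> i) = 1"
begin

abbreviation "mix \<equiv> mixture M \<pi> X R"
abbreviation "post \<equiv> posterior M \<pi> X R"

lemma space_label_law_nonempty: "space (label_law M \<pi>) \<noteq> {}"
proof -
  have "{1..M} \<noteq> {}" using pi_sum by (metis sum.empty zero_neq_one)
  then show ?thesis by (simp add: label_law_def)
qed

lemma R_measurable: "R \<in> label_law M \<pi> \<rightarrow>\<^sub>M subprob_algebra X"
  unfolding label_law_def measurable_cong_sets[OF sets_density refl] measurable_count_space_eq1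
  using prob_space_R sets_R by (auto simp: space_subprob_algebra prob_space_imp_subprob_space)

lemma emeasure_label_law_bind:
  assumes A: "A \<in> sets X"
  shows "emeasure (label_law M \<pi> \<bind> R) A = (\<Sum>i\<in>{1..M}. ennreal (\<pi> i) * emeasure (R i) A)"
proof -
  have "emeasure (label_law M \<pi> \<bind> R) A = (\<integral>\<^sup>+i. emeasure (R i) A \<partial>label_law M \<pi>)"
    by (rule emeasure_bind[OF space_label_law_nonempty R_measurable A])
  also have "\<dots> = (\<Sum>i\<in>{1..M}. ennreal (\<pi> i) * emeasure (R i) A)"
    unfolding label_law_def by (simp add: nn_integral_density nn_integral_count_space_finite)
  finally show ?thesis .
qed

lemma sets_label_law_bind: "sets (label_law M \<pi> \<bind> R) = sets X"
  using sets_R by (intro sets_bind[OF _ space_label_law_nonempty]) (auto simp: label_law_def)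

lemma mixture_eq_bind: "mix = label_law M \<pi> \<bind> R"
proof -
  have "mix = measure_of (space X) (sets X) (emeasure (label_law M \<pi> \<bind> R))"
    unfolding mixture_def
    by (intro measure_of_eq) (simp_all add: sets.space_closed sets.sigma_sets_eq emeasure_label_law_bind)
  also have "\<dots> = label_law M \<pi> \<bind> R"
    by (metis measure_of_of_measure sets_label_law_bind sets_eq_imp_space_eq)
  finally show ?thesis .
qed

lemma sets_mixture [simp, measurable_cong]: "sets mix = sets X"
  unfolding mixture_eq_bind by (rule sets_label_law_bind)

lemma space_mixture [simp]: "space mix = space X"
  using sets_eq_imp_space_eq[OF sets_mixture] .

lemma measurable_mixture [simp]: "measurable mix N = measurable X N"
  by (rule measurable_cong_sets[OF sets_mixture refl])

lemma nn_integral_mixture: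
  assumes f: "f \<in> borel_measurable X"
  shows "(\<integral>\<^sup>+z. f z \<partial>mix) = (\<Sum>i\<in>{1..M}. ennreal (\<pi> i) * (\<integral>\<^sup>+z. f z \<partial>R i))"
proof -
  have "(\<integral>\<^sup>+z. f z \<partial>mix) = (\<integral>\<^sup>+i. (\<integral>\<^sup>+z. f z \<partial>R i) \<partial>label_law M \<pi>)"
    unfolding mixture_eq_bind by (rule nn_integral_bind[OF f R_measurable])
  also have "\<dots> = (\<Sum>i\<in>{1..M}. ennreal (\<pi> i) * (\<integral>\<^sup>+z. f z \<partial>R i))"
    unfolding label_law_def by (simp add: nn_integral_density nn_integral_count_space_finite)
  finally show ?thesis .
qed

lemma emeasure_mixture:
  "A \<in> sets X \<Longrightarrow> emeasure mix A = (\<Sum>i\<in>{1..M}. ennreal (\<pi> i) * emeasure (R i) A)"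
  unfolding mixture_eq_bind by (rule emeasure_label_law_bind)

sublocale mix: prob_space mix
proof
  have "emeasure (R i) (space X) = 1" if "i \<in> {1..M}" for i
    using prob_space.emeasure_space_1[OF prob_space_R[OF that]] sets_eq_imp_space_eq[OF sets_R[OF that]]
    by simp
  then have "emeasure mix (space mix) = (\<Sum>i\<in>{1..M}. ennreal (\<pi> i))"
    by (simp add: emeasure_mixture)
  also have "\<dots> = 1"
    using pi_pos pi_sum by (subst sum_ennreal) (auto intro: less_imp_le)
  finally show "emeasure mix (space mix) = 1" .
qed

lemma absolutely_continuous_mixture:
  assumes i: "i \<in> {1..M}"
  shows "absolutely_continuous mix (R i)"
proof (unfold absolutely_continuous_def, intro subsetI)
  fix A assume "A \<in> null_sets mix"
  then have "A \<in> sets X" "emeasure mix A = 0" by auto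
  then have "ennreal (\<pi> i) * emeasure (R i) A = 0"
    using i by (simp add: emeasure_mixture)
  then show "A \<in> null_sets (R i)"
    using pi_pos[OF i] sets_R[OF i] \<open>A \<in> sets X\<close> by auto
qed

lemma measurable_posterior [measurable]: "post i \<in> borel_measurable X"
  unfolding posterior_def by (simp flip: measurable_mixture)

lemma posterior_nonneg: "i \<in> {1..M} \<Longrightarrow> 0 \<le> post i z"
  by (simp add: posterior_def less_imp_le pi_pos)

lemma nn_integral_posterior_mult:
  assumes i: "i \<in> {1..M}" and f: "f \<in> borel_measurable X"
  shows "(\<integral>\<^sup>+z. ennreal (post i z) * f z \<partial>mix) = ennreal (\<pi> i) * (\<integral>\<^sup>+z. f z \<partial>R i)"
proof -
  interpret R: prob_space "R i" using prob_space_R[OF i] .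
  have "AE z in mix. RN_deriv mix (R i) z \<noteq> \<infinity>"
    using absolutely_continuous_mixture[OF i] sets_R[OF i]
    by (intro mix.RN_deriv_finite R.sigma_finite_measure) auto
  then have "AE z in mix. ennreal (post i z) = ennreal (\<pi> i) * RN_deriv mix (R i) z"
    using less_imp_le[OF pi_pos[OF i]]
    by (auto elim!: eventually_mono simp: posterior_def ennreal_mult top.not_eq_extremum)
  then have "(\<integral>\<^sup>+z. ennreal (post i z) * f z \<partial>mix)
      = (\<integral>\<^sup>+z. ennreal (\<pi> i) * (RN_deriv mix (R i) z * f z) \<partial>mix)"
    by (intro nn_integral_cong_AE) (auto simp: mult.assoc)
  also have "\<dots> = ennreal (\<pi> i) * (\<integral>\<^sup>+z. RN_deriv mix (R i) z * f z \<partial>mix)"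
    using f by (intro nn_integral_cmult) simp
  also have "(\<integral>\<^sup>+z. RN_deriv mix (R i) z * f z \<partial>mix) = (\<integral>\<^sup>+z. f z \<partial>R i)"
    using absolutely_continuous_mixture[OF i] sets_R[OF i] f
    by (intro mix.RN_deriv_nn_integral[symmetric]) auto
  finally show ?thesis .
qed

lemma AE_sum_posterior: "AE z in mix. (\<Sum>i\<in>{1..M}. post i z) = 1"
proof -
  have "AE z in mix. (\<Sum>i\<in>{1..M}. ennreal (post i z)) = 1"
  proof (rule mix.density_unique_finite_measure)
    fix A assume "A \<in> sets mix"
    then have A: "A \<in> sets X" by simp
    have "(\<integral>\<^sup>+z. (\<Sum>i\<in>{1..M}. ennreal (post i z)) * indicator A z \<partial>mix)
        = (\<Sum>i\<in>{1..M}. \<integral>\<^sup>+z. ennreal (post i z) * indicator A z \<partial>mix)"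
      unfolding sum_distrib_right using A by (intro nn_integral_sum) simp
    also have "\<dots> = (\<Sum>i\<in>{1..M}. ennreal (\<pi> i) * emeasure (R i) A)"
      using A sets_R by (intro sum.cong refl) (simp add: nn_integral_posterior_mult)
    also have "\<dots> = emeasure mix A"
      by (rule emeasure_mixture[OF A, symmetric])
    also have "\<dots> = (\<integral>\<^sup>+z. 1 * indicator A z \<partial>mix)"
      using A by simp
    finally show "(\<integral>\<^sup>+z. (\<Sum>i\<in>{1..M}. ennreal (post i z)) * indicator A z \<partial>mix)
        = (\<integral>\<^sup>+z. 1 * indicator A z \<partial>mix)" .
  qed simp_all
  then show ?thesis
  proof eventually_elim
    fix z assume "(\<Sum>i\<in>{1..M}. ennreal (post i z)) = 1"
    then have "ennreal (\<Sum>i\<in>{1..M}. post i z) = 1"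
      by (subst (asm) sum_ennreal) (auto simp: posterior_nonneg)
    then show "(\<Sum>i\<in>{1..M}. post i z) = 1"
      by (simp add: sum_nonneg posterior_nonneg)
  qed
qed

lemma AE_posterior_le_1:
  assumes i: "i \<in> {1..M}"
  shows "AE z in mix. post i z \<le> 1"
  using AE_sum_posterior
proof eventually_elim
  fix z assume "(\<Sum>j\<in>{1..M}. post j z) = 1"
  moreover have "post i z \<le> (\<Sum>j\<in>{1..M}. post j z)"
    using i by (intro member_le_sum posterior_nonneg) auto
  ultimately show "post i z \<le> 1" by simp
qed

end

section \<open>Transition kernels\<close>

locale kernel_model =
  fixes M :: nat and \<pi> :: "nat \<Rightarrow> real" and Z :: "'a measure" and Z' :: "'b measure"
    and \<kappa> :: "'a \<Rightarrow> 'b measure" and P :: "nat \<Rightarrow> 'a measure" and Q :: "nat \<Rightarrow> 'b measure"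
  assumes pi_pos: "\<And>i. i \<in> {1..M} \<Longrightarrow> 0 < \<pi> i"
    and pi_sum: "(\<Sum>i\<in>{1..M}. \<pi> i) = 1"
    and kappa: "transition_kernel Z Z' \<kappa>"
    and prob_space_P: "\<And>i. i \<in> {1..M} \<Longrightarrow> prob_space (P i)"
    and sets_P: "\<And>i. i \<in> {1..M} \<Longrightarrow> sets (P i) = sets Z"
    and sets_Q: "\<And>i. i \<in> {1..M} \<Longrightarrow> sets (Q i) = sets Z'"
    and emeasure_Q: "\<And>i B. i \<in> {1..M} \<Longrightarrow> B \<in> sets Z' \<Longrightarrow> emeasure (Q i) B = (\<integral>\<^sup>+z. emeasure (\<kappa> z) B \<partial>P i)"
begin

sublocale P: mixture_model M \<pi> Z P
  using pi_pos pi_sum prob_space_P sets_P by (intro mixture_model.intro)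

lemma prob_space_kappa: "z \<in> space Z \<Longrightarrow> prob_space (\<kappa> z)"
  and sets_kappa: "z \<in> space Z \<Longrightarrow> sets (\<kappa> z) = sets Z'"
  using kappa unfolding transition_kernel_def by auto

lemma kappa_measurable [measurable]: "\<kappa> \<in> Z \<rightarrow>\<^sub>M subprob_algebra Z'"
  using kappa unfolding transition_kernel_def
  by (intro measurable_subprob_algebra) (auto intro: prob_space_imp_subprob_space)

lemma Q_eq_bind:
  assumes i: "i \<in> {1..M}"
  shows "Q i = P i \<bind> \<kappa>"
proof -
  interpret P: prob_space "P i" using prob_space_P[OF i] .
  have \<kappa>: "\<kappa> \<in> P i \<rightarrow>\<^sub>M subprob_algebra Z'"
    by (simp add: measurable_cong_sets[OF sets_P[OF i] refl])
  show ?thesis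
  proof (rule measure_eqI)
    show "sets (Q i) = sets (P i \<bind> \<kappa>)"
      using sets_Q[OF i] sets_kappa sets_eq_imp_space_eq[OF sets_P[OF i]]
      by (subst sets_bind[OF _ P.not_empty]) auto
    fix B assume "B \<in> sets (Q i)"
    then have B: "B \<in> sets Z'" using sets_Q[OF i] by simp
    show "emeasure (Q i) B = emeasure (P i \<bind> \<kappa>) B"
      using emeasure_Q[OF i B] by (simp add: emeasure_bind[OF P.not_empty \<kappa> B])
  qed
qed

lemma nn_integral_Q:
  assumes i: "i \<in> {1..M}" and g: "g \<in> borel_measurable Z'"
  shows "(\<integral>\<^sup>+z'. g z' \<partial>Q i) = (\<integral>\<^sup>+z. (\<integral>\<^sup>+z'. g z' \<partial>\<kappa> z) \<partial>P i)"
  unfolding Q_eq_bind[OF i]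
  by (rule nn_integral_bind[OF g]) (simp add: measurable_cong_sets[OF sets_P[OF i] refl])

sublocale Q: mixture_model M \<pi> Z' Q
proof (intro mixture_model.intro)
  fix i assume i: "i \<in> {1..M}"
  interpret P: prob_space "P i" using prob_space_P[OF i] .
  show "prob_space (Q i)"
    unfolding Q_eq_bind[OF i]
    using prob_space_kappa sets_eq_imp_space_eq[OF sets_P[OF i]]
    by (intro P.prob_space_bind[where S = Z'] AE_I2) (simp_all add: measurable_cong_sets[OF sets_P[OF i] refl])
qed (use pi_pos pi_sum sets_Q in auto)

lemma mixture_Q_eq_bind: "Q.mix = P.mix \<bind> \<kappa>"
proof (rule measure_eqI)
  show "sets Q.mix = sets (P.mix \<bind> \<kappa>)"
    using P.mix.not_empty by (subst sets_bind) (auto simp: sets_kappa)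
  fix B assume "B \<in> sets Q.mix"
  then have B: "B \<in> sets Z'" by simp
  have "emeasure Q.mix B = (\<Sum>i\<in>{1..M}. ennreal (\<pi> i) * (\<integral>\<^sup>+z. emeasure (\<kappa> z) B \<partial>P i))"
    using B by (simp add: Q.emeasure_mixture emeasure_Q)
  also have "\<dots> = (\<integral>\<^sup>+z. emeasure (\<kappa> z) B \<partial>P.mix)"
    using B by (intro P.nn_integral_mixture[symmetric]) measurable
  also have "\<dots> = emeasure (P.mix \<bind> \<kappa>) B"
    using P.mix.not_empty B by (intro emeasure_bind[symmetric]) simp_all
  finally show "emeasure Q.mix B = emeasure (P.mix \<bind> \<kappa>) B" .
qed

abbreviation "J \<equiv> joint_law M \<pi> Z Z' P \<kappa>"

lemma Pair_measurable_kappa: "z \<in> space Z \<Longrightarrow> Pair z \<in> \<kappa> z \<rightarrow>\<^sub>M Z \<Otimes>\<^sub>M Z'"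
  using measurable_Pair1'[of z Z Z'] by (simp add: measurable_cong_sets[OF sets_kappa refl])

lemma pair_kernel_measurable: "(\<lambda>z. distr (\<kappa> z) (Z \<Otimes>\<^sub>M Z') (Pair z)) \<in> P.mix \<rightarrow>\<^sub>M subprob_algebra (Z \<Otimes>\<^sub>M Z')"
  using measurable_distr2[of "\<lambda>z z'. (z, z')" Z Z' "Z \<Otimes>\<^sub>M Z'" \<kappa>] by simp

lemma sets_joint_law [simp, measurable_cong]: "sets J = sets (Z \<Otimes>\<^sub>M Z')"
  unfolding joint_law_def using P.mix.not_empty by (intro sets_bind) auto

sublocale J: prob_space J
  unfolding joint_law_def
proof (rule P.mix.prob_space_bind[OF AE_I2 pair_kernel_measurable])
  fix z assume "z \<in> space P.mix"
  then have z: "z \<in> space Z" by simp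
  show "prob_space (distr (\<kappa> z) (Z \<Otimes>\<^sub>M Z') (Pair z))"
    using prob_space_kappa[OF z] Pair_measurable_kappa[OF z] by (rule prob_space.prob_space_distr)
qed

lemma nn_integral_joint_law:
  assumes h: "h \<in> borel_measurable (Z \<Otimes>\<^sub>M Z')"
  shows "(\<integral>\<^sup>+w. h w \<partial>J) = (\<integral>\<^sup>+z. (\<integral>\<^sup>+z'. h (z, z') \<partial>\<kappa> z) \<partial>P.mix)"
  unfolding joint_law_def nn_integral_bind[OF h pair_kernel_measurable]
  using h by (intro nn_integral_cong) (simp add: nn_integral_distr Pair_measurable_kappa)

lemma distr_joint_law_fst: "distr J Z fst = P.mix"
proof -
  have "distr J Z fst = P.mix \<bind> (\<lambda>z. distr (distr (\<kappa> z) (Z \<Otimes>\<^sub>M Z') (Pair z)) Z fst)"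
    unfolding joint_law_def by (rule distr_bind[OF pair_kernel_measurable P.mix.not_empty]) simp
  also have "\<dots> = P.mix \<bind> return Z"
    using prob_space_kappa Pair_measurable_kappa
    by (intro bind_cong refl) (simp add: distr_distr comp_def prob_space.distr_const)
  also have "\<dots> = P.mix" by (rule bind_return'') simp
  finally show ?thesis .
qed

lemma distr_joint_law_snd: "distr J Z' snd = Q.mix"
proof -
  have "distr J Z' snd = P.mix \<bind> (\<lambda>z. distr (distr (\<kappa> z) (Z \<Otimes>\<^sub>M Z') (Pair z)) Z' snd)"
    unfolding joint_law_def by (rule distr_bind[OF pair_kernel_measurable P.mix.not_empty]) simp
  also have "\<dots> = P.mix \<bind> \<kappa>"
    using sets_kappa Pair_measurable_kappa
    by (intro bind_cong refl) (simp add: distr_distr comp_def distr_id2)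
  finally show ?thesis by (simp add: mixture_Q_eq_bind)
qed

lemma AE_joint_law_fst: "AE z in P.mix. R z \<Longrightarrow> AE w in J. R (fst w)"
  by (rule AE_distrD[of fst J Z]) (simp_all only: distr_joint_law_fst measurable_fst
      measurable_cong_sets[OF sets_joint_law refl])

lemma AE_joint_law_snd: "AE z' in Q.mix. R z' \<Longrightarrow> AE w in J. R (snd w)"
  by (rule AE_distrD[of snd J Z']) (simp_all only: distr_joint_law_snd measurable_snd
      measurable_cong_sets[OF sets_joint_law refl])

lemma integral_joint_law_fst:
  fixes f :: "'a \<Rightarrow> real"
  assumes "f \<in> borel_measurable Z"
  shows "(\<integral>w. f (fst w) \<partial>J) = (\<integral>z. f z \<partial>P.mix)"
  unfolding distr_joint_law_fst[symmetric] by (rule integral_distr[symmetric]) (simp_all add: assms)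

lemma integral_joint_law_snd:
  fixes f :: "'b \<Rightarrow> real"
  assumes "f \<in> borel_measurable Z'"
  shows "(\<integral>w. f (snd w) \<partial>J) = (\<integral>z'. f z' \<partial>Q.mix)"
  unfolding distr_joint_law_snd[symmetric] by (rule integral_distr[symmetric]) (simp_all add: assms)

text \<open>The Markov property of \<open>\<Delta> \<rightarrow> Z \<rightarrow> Z'\<close>: \<open>q\<^sub>i(Z')\<close> is the conditional expectation of \<open>p\<^sub>i(Z)\<close> given \<open>Z'\<close>.\<close>

lemma nn_integral_posterior_fst_mult:
  assumes i: "i \<in> {1..M}" and g: "g \<in> borel_measurable Z'"
  shows "(\<integral>\<^sup>+w. ennreal (P.post i (fst w)) * g (snd w) \<partial>J) = (\<integral>\<^sup>+z'. ennreal (Q.post i z') * g z' \<partial>Q.mix)"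
proof -
  have "(\<integral>\<^sup>+w. ennreal (P.post i (fst w)) * g (snd w) \<partial>J)
      = (\<integral>\<^sup>+z. (\<integral>\<^sup>+z'. ennreal (P.post i z) * g z' \<partial>\<kappa> z) \<partial>P.mix)"
    using g by (simp add: nn_integral_joint_law)
  also have "\<dots> = (\<integral>\<^sup>+z. ennreal (P.post i z) * (\<integral>\<^sup>+z'. g z' \<partial>\<kappa> z) \<partial>P.mix)"
    using g by (intro nn_integral_cong nn_integral_cmult) (simp add: measurable_cong_sets[OF sets_kappa refl])
  also have "\<dots> = ennreal (\<pi> i) * (\<integral>\<^sup>+z. (\<integral>\<^sup>+z'. g z' \<partial>\<kappa> z) \<partial>P i)"
    using measurable_compose[OF kappa_measurable nn_integral_measurable_subprob_algebra[OF g]]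
    by (rule P.nn_integral_posterior_mult[OF i])
  also have "\<dots> = ennreal (\<pi> i) * (\<integral>\<^sup>+z'. g z' \<partial>Q i)"
    by (simp add: nn_integral_Q[OF i g])
  also have "\<dots> = (\<integral>\<^sup>+z'. ennreal (Q.post i z') * g z' \<partial>Q.mix)"
    by (rule Q.nn_integral_posterior_mult[OF i g, symmetric])
  finally show ?thesis .
qed

lemma integral_posterior_fst_mult_snd:
  assumes i: "i \<in> {1..M}" and j: "j \<in> {1..M}"
  shows "(\<integral>w. P.post i (fst w) * Q.post j (snd w) \<partial>J) = (\<integral>w. Q.post i (snd w) * Q.post j (snd w) \<partial>J)"
proof -
  have nonneg: "0 \<le> P.post i z" "0 \<le> Q.post i z'" "0 \<le> Q.post j z'" for z z'
    using i j by (simp_all add: P.posterior_nonneg Q.posterior_nonneg)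
  have "(\<integral>w. P.post i (fst w) * Q.post j (snd w) \<partial>J)
      = enn2real (\<integral>\<^sup>+w. ennreal (P.post i (fst w)) * ennreal (Q.post j (snd w)) \<partial>J)"
    using nonneg by (subst integral_eq_nn_integral) (simp_all add: ennreal_mult)
  also have "\<dots> = enn2real (\<integral>\<^sup>+z'. ennreal (Q.post i z') * ennreal (Q.post j z') \<partial>Q.mix)"
    using nn_integral_posterior_fst_mult[OF i, of "\<lambda>z'. ennreal (Q.post j z')"] by simp
  also have "\<dots> = (\<integral>z'. Q.post i z' * Q.post j z' \<partial>Q.mix)"
    using nonneg by (subst integral_eq_nn_integral) (simp_all add: ennreal_mult)
  also have "\<dots> = (\<integral>w. Q.post i (snd w) * Q.post j (snd w) \<partial>J)"
    by (rule integral_joint_law_snd[symmetric]) simp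
  finally show ?thesis .
qed

lemma AE_posterior_fst_bounded: "i \<in> {1..M} \<Longrightarrow> AE w in J. \<bar>P.post i (fst w)\<bar> \<le> 1"
  using P.AE_posterior_le_1 P.posterior_nonneg by (auto intro!: AE_joint_law_fst elim!: eventually_mono)

lemma AE_posterior_snd_bounded: "i \<in> {1..M} \<Longrightarrow> AE w in J. \<bar>Q.post i (snd w)\<bar> \<le> 1"
  using Q.AE_posterior_le_1 Q.posterior_nonneg by (auto intro!: AE_joint_law_snd elim!: eventually_mono)

lemma AE_sum_posterior_fst_eq_snd:
  "AE w in J. (\<Sum>i\<in>{1..M}. P.post i (fst w)) = (\<Sum>i\<in>{1..M}. Q.post i (snd w))"
  using AE_joint_law_fst[OF P.AE_sum_posterior] AE_joint_law_snd[OF Q.AE_sum_posterior]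
  by eventually_elim simp

lemma
  assumes K: "char_kernel M K" and pi_lt_1: "\<And>i. i \<in> {1..M} \<Longrightarrow> \<pi> i < 1"
  shows kmd_transition_le: "kmd M K \<pi> Z' Q \<le> kmd M K \<pi> Z P"
    and kmd_transition_eq_iff: "kmd M K \<pi> Z P = kmd M K \<pi> Z' Q
      \<longleftrightarrow> (\<forall>i\<in>{1..M}. AE w in J. P.post i (fst w) = Q.post i (snd w))"
proof -
  define c where "c = (\<Sum>i\<in>{1..M}. \<Sum>j\<in>{1..M}. \<pi> i * \<pi> j * K i j)"
  define d where "d = (\<Sum>i\<in>{1..M}. \<pi> i * K i i)"
  define a where "a i w = P.post i (fst w)" for i and w :: "'a \<times> 'b"
  define b where "b i w = Q.post i (snd w)" for i and w :: "'a \<times> 'b"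
  have "c < d"
    using kmd_denominator_pos[OF K _ pi_sum] pi_pos pi_lt_1 unfolding c_def d_def by blast
  have kmd_P: "kmd M K \<pi> Z P = ((\<integral>w. kernel_inner M K (\<lambda>i. a i w) (\<lambda>i. a i w) \<partial>J) - c) / (d - c)"
    unfolding kmd_eq_kernel_inner a_def c_def d_def
    by (subst integral_joint_law_fst) (simp_all add: kernel_inner_def)
  have kmd_Q: "kmd M K \<pi> Z' Q = ((\<integral>w. kernel_inner M K (\<lambda>i. b i w) (\<lambda>i. b i w) \<partial>J) - c) / (d - c)"
    unfolding kmd_eq_kernel_inner b_def c_def d_def
    by (subst integral_joint_law_snd) (simp_all add: kernel_inner_def)
  have a: "a i \<in> borel_measurable J" "AE w in J. \<bar>a i w\<bar> \<le> 1" if "i \<in> {1..M}" for i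
    using AE_posterior_fst_bounded[OF that] unfolding a_def by simp_all
  have b: "b i \<in> borel_measurable J" "AE w in J. \<bar>b i w\<bar> \<le> 1" if "i \<in> {1..M}" for i
    using AE_posterior_snd_bounded[OF that] unfolding b_def by simp_all
  have orth: "(\<integral>w. a i w * b j w \<partial>J) = (\<integral>w. b i w * b j w \<partial>J)" if "i \<in> {1..M}" "j \<in> {1..M}" for i j
    unfolding a_def b_def by (rule integral_posterior_fst_mult_snd[OF that])
  have sums: "AE w in J. (\<Sum>i\<in>{1..M}. a i w) = (\<Sum>i\<in>{1..M}. b i w)"
    using AE_sum_posterior_fst_eq_snd unfolding a_def b_def .
  have J: "finite_measure J" by (rule J.finite_measure_axioms)
  show "kmd M K \<pi> Z' Q \<le> kmd M K \<pi> Z P"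
    unfolding kmd_P kmd_Q using \<open>c < d\<close>
    by (intro divide_right_mono diff_right_mono integral_kernel_inner_le_of_orthogonal[OF J K a b orth sums]) auto
  show "kmd M K \<pi> Z P = kmd M K \<pi> Z' Q
      \<longleftrightarrow> (\<forall>i\<in>{1..M}. AE w in J. P.post i (fst w) = Q.post i (snd w))"
  proof -
    have "kmd M K \<pi> Z P = kmd M K \<pi> Z' Q
        \<longleftrightarrow> (\<integral>w. kernel_inner M K (\<lambda>i. a i w) (\<lambda>i. a i w) \<partial>J)
          = (\<integral>w. kernel_inner M K (\<lambda>i. b i w) (\<lambda>i. b i w) \<partial>J)"
      unfolding kmd_P kmd_Q using \<open>c < d\<close> by simp
    also have "\<dots> \<longleftrightarrow> (\<forall>i\<in>{1..M}. AE w in J. a i w = b i w)"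
      by (rule integral_kernel_inner_eq_iff_of_orthogonal[OF J K a b orth sums])
    finally show ?thesis by (simp only: a_def b_def)
  qed
qed

end

section \<open>Bimeasurable bijections\<close>

lemma transition_kernel_return:
  assumes T: "T \<in> Z \<rightarrow>\<^sub>M Z'"
  shows "transition_kernel Z Z' (\<lambda>z. return Z' (T z))"
  unfolding transition_kernel_def
proof (intro conjI ballI)
  fix z assume "z \<in> space Z"
  then show "prob_space (return Z' (T z))"
    using T by (intro prob_space_return) (rule measurable_space)
next
  fix B assume "B \<in> sets Z'"
  then show "(\<lambda>z. emeasure (return Z' (T z)) B) \<in> borel_measurable Z"
    using T by simp
qed simp

lemma kmd_distr_le:
  assumes K: "char_kernel M K"
    and pi: "\<And>i. i \<in> {1..M} \<Longrightarrow> 0 < \<pi> i \<and> \<pi> i < 1" and pi_sum: "(\<Sum>i\<in>{1..M}. \<pi> i) = 1"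
    and P: "\<And>i. i \<in> {1..M} \<Longrightarrow> prob_space (P i) \<and> sets (P i) = sets Z"
    and T: "T \<in> Z \<rightarrow>\<^sub>M Z'"
  shows "kmd M K \<pi> Z' (\<lambda>i. distr (P i) Z' T) \<le> kmd M K \<pi> Z P"
proof -
  have "emeasure (distr (P i) Z' T) B = (\<integral>\<^sup>+z. emeasure (return Z' (T z)) B \<partial>P i)"
    if "i \<in> {1..M}" "B \<in> sets Z'" for i B
  proof -
    have "T \<in> P i \<rightarrow>\<^sub>M Z'"
      using T P[OF that(1)] by (simp add: measurable_cong_sets[of "P i" Z, OF _ refl])
    then have "(\<integral>\<^sup>+y. indicator B y \<partial>distr (P i) Z' T) = (\<integral>\<^sup>+z. indicator B (T z) \<partial>P i)"
      using that(2) by (intro nn_integral_distr) simp_all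
    then show ?thesis
      using that(2) by simp
  qed
  then interpret kernel_model M \<pi> Z Z' "\<lambda>z. return Z' (T z)" P "\<lambda>i. distr (P i) Z' T"
    using pi pi_sum P transition_kernel_return[OF T] by (intro kernel_model.intro) auto
  show ?thesis
    using kmd_transition_le[OF K] pi by simp
qed

lemma kmd_cong:
  assumes "\<And>i. i \<in> {1..M} \<Longrightarrow> R i = R' i"
  shows "kmd M K \<pi> X R = kmd M K \<pi> X R'"
proof -
  have mix: "mixture M \<pi> X R = mixture M \<pi> X R'"
    unfolding mixture_def using assms by (metis (no_types, lifting) sum.cong)
  have "posterior M \<pi> X R i = posterior M \<pi> X R' i" if "i \<in> {1..M}" for i
    unfolding posterior_def mix using assms[OF that] by simp
  then have "(\<lambda>z. kernel_inner M K (\<lambda>i. posterior M \<pi> X R i z) (\<lambda>i. posterior M \<pi> X R i z))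
      = (\<lambda>z. kernel_inner M K (\<lambda>i. posterior M \<pi> X R' i z) (\<lambda>i. posterior M \<pi> X R' i z))"
    unfolding kernel_inner_def by (intro ext sum.cong refl) simp
  then show ?thesis
    unfolding kmd_eq_kernel_inner mix by simp
qed

lemma kmd_distr_bij_eq:
  assumes K: "char_kernel M K"
    and pi: "\<And>i. i \<in> {1..M} \<Longrightarrow> 0 < \<pi> i \<and> \<pi> i < 1" and pi_sum: "(\<Sum>i\<in>{1..M}. \<pi> i) = 1"
    and P: "\<And>i. i \<in> {1..M} \<Longrightarrow> prob_space (P i) \<and> sets (P i) = sets Z"
    and T: "T \<in> Z \<rightarrow>\<^sub>M Z'" "bij_betw T (space Z) (space Z')"
    and T_inv: "the_inv_into (space Z) T \<in> Z' \<rightarrow>\<^sub>M Z"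
  shows "kmd M K \<pi> Z P = kmd M K \<pi> Z' (\<lambda>i. distr (P i) Z' T)"
proof -
  let ?P' = "\<lambda>i. distr (P i) Z' T"
  have P': "prob_space (?P' i) \<and> sets (?P' i) = sets Z'" if "i \<in> {1..M}" for i
    using P[OF that] T(1) by (auto simp: measurable_cong_sets[of "P i" Z, OF _ refl] prob_space.prob_space_distr)
  have "distr (?P' i) Z (the_inv_into (space Z) T) = P i" if "i \<in> {1..M}" for i
  proof -
    have sets: "sets (P i) = sets Z" using P[OF that] by simp
    have "distr (?P' i) Z (the_inv_into (space Z) T) = distr (P i) Z (the_inv_into (space Z) T \<circ> T)"
      using T(1) T_inv by (intro distr_distr) (simp_all add: measurable_cong_sets[OF sets refl])
    also have "\<dots> = distr (P i) Z (\<lambda>x. x)"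
      using T(2) sets_eq_imp_space_eq[OF sets]
      by (intro distr_cong) (auto simp: bij_betw_def the_inv_into_f_f)
    also have "\<dots> = P i" using sets by (intro distr_id2) simp
    finally show ?thesis .
  qed
  then have "kmd M K \<pi> Z P = kmd M K \<pi> Z (\<lambda>i. distr (?P' i) Z (the_inv_into (space Z) T))"
    by (intro kmd_cong) simp
  also have "\<dots> \<le> kmd M K \<pi> Z' ?P'"
    by (rule kmd_distr_le[OF K pi pi_sum P' T_inv])
  moreover have "kmd M K \<pi> Z' ?P' \<le> kmd M K \<pi> Z P"
    by (rule kmd_distr_le[OF K pi pi_sum P T(1)])
  ultimately show ?thesis by simp
qed

theorem proposition2:
  fixes M :: nat and K :: "nat \<Rightarrow> nat \<Rightarrow> real" and \<pi> :: "nat \<Rightarrow> real"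
    and Z :: "'a measure" and Z' :: "'b measure"
    and \<kappa> :: "'a \<Rightarrow> 'b measure"
    and P :: "nat \<Rightarrow> 'a measure" and Q :: "nat \<Rightarrow> 'b measure"
  assumes M2: "M \<ge> 2"
    and K: "char_kernel M K"
    and pi_pos: "\<forall>i\<in>{1..M}. 0 < \<pi> i \<and> \<pi> i < 1"
    and pi_sum: "(\<Sum>i\<in>{1..M}. \<pi> i) = 1"
    and kappa: "transition_kernel Z Z' \<kappa>"
    and P: "\<forall>i\<in>{1..M}. prob_space (P i) \<and> sets (P i) = sets Z"
    and Q_sets: "\<forall>i\<in>{1..M}. sets (Q i) = sets Z'"
    and Q_def: "\<forall>i\<in>{1..M}. \<forall>B\<in>sets Z'. emeasure (Q i) B = (\<integral>\<^sup>+ z. emeasure (\<kappa> z) B \<partial>P i)"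
  shows "kmd M K \<pi> Z P \<ge> kmd M K \<pi> Z' Q
    \<and> (kmd M K \<pi> Z P = kmd M K \<pi> Z' Q \<longleftrightarrow>
         (\<forall>i\<in>{1..M}. AE w in joint_law M \<pi> Z Z' P \<kappa>.
             posterior M \<pi> Z P i (fst w) = posterior M \<pi> Z' Q i (snd w)))
    \<and> (\<forall>T. T \<in> Z \<rightarrow>\<^sub>M Z' \<and> bij_betw T (space Z) (space Z')
             \<and> the_inv_into (space Z) T \<in> Z' \<rightarrow>\<^sub>M Z \<longrightarrow>
           kmd M K \<pi> Z P = kmd M K \<pi> Z' (\<lambda>i. distr (P i) Z' T))"
proof -
  interpret kernel: kernel_model M \<pi> Z Z' \<kappa> P Q
    using pi_pos pi_sum kappa P Q_sets Q_def by (intro kernel_model.intro) auto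
  have pi_lt_1: "\<And>i. i \<in> {1..M} \<Longrightarrow> \<pi> i < 1" using pi_pos by blast
  have "kmd M K \<pi> Z P = kmd M K \<pi> Z' (\<lambda>i. distr (P i) Z' T)"
    if "T \<in> Z \<rightarrow>\<^sub>M Z' \<and> bij_betw T (space Z) (space Z') \<and> the_inv_into (space Z) T \<in> Z' \<rightarrow>\<^sub>M Z" for T
    using that by (intro kmd_distr_bij_eq[OF K _ pi_sum]) (use pi_pos P in blast)+
  then show ?thesis
    using kernel.kmd_transition_le[OF K pi_lt_1] kernel.kmd_transition_eq_iff[OF K pi_lt_1] by blast
qed

end
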